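(* For integers $m,n>2$ and $l>0$, \begin{align*} \zeta_{H_{m,n,l}}(u)^{-1}=&-4u^{2m+2n+2l}+u^{2m+2n}+4u^{2m+n+2l}+4u^{m+2n+2l}-2u^{2m+n}-2u^{m+2n}\\ &-4u^{m+n+2l}+4u^{m+n}+u^{2n}+u^{2m}-2u^{n}-2u^{m}+1. \end{align*}
   Context: For $m,n>2$ and $l>0$, the handcuff graph $H_{m,n,l}$ consists of two vertex-disjoint cycles $C_m$ and $C_n$ together with a path of $l$ edges joining a vertex of $C_m$ to a vertex of $C_n$, internally disjoint from both cycles. For a finite connected graph $G$ with vertex set $V$, edge set $E$ and no vertex of degree $1$, let $r=|E|-|V|+1$, $\mathcal{A}$ the adjacency matrix, $\mathcal{Q}=D-I$ with $D$ the diagonal degree matrix; the reciprocal Ihara zeta function is $\zeta_G(u)^{-1}=(1-u^2)^{r-1}\det(I-\mathcal{A}u+\mathcal{Q}u^2)$. *)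

theory Defs
  imports "Jordan_Normal_Form.Determinant"
begin

text \<open>A finite simple graph on the vertex set {0..<N}, given by a symmetric
irreflexive adjacency predicate adj.\<close>

definition graph_edges :: "nat \<Rightarrow> (nat \<Rightarrow> nat \<Rightarrow> bool) \<Rightarrow> (nat \<times> nat) set" where
  "graph_edges N adj = {(i, j). i < j \<and> j < N \<and> adj i j}"

definition graph_degree :: "nat \<Rightarrow> (nat \<Rightarrow> nat \<Rightarrow> bool) \<Rightarrow> nat \<Rightarrow> nat" where
  "graph_degree N adj i = card {j. j < N \<and> adj i j}"

definition adj_matrix :: "nat \<Rightarrow> (nat \<Rightarrow> nat \<Rightarrow> bool) \<Rightarrow> 'a :: comm_ring_1 mat" where
  "adj_matrix N adj = mat N N (\<lambda>(i, j). if adj i j then 1 else 0)"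

definition Q_matrix :: "nat \<Rightarrow> (nat \<Rightarrow> nat \<Rightarrow> bool) \<Rightarrow> 'a :: comm_ring_1 mat" where
  "Q_matrix N adj = mat N N (\<lambda>(i, j). if i = j then of_nat (graph_degree N adj i) - 1 else 0)"

definition cycle_rank :: "nat \<Rightarrow> (nat \<Rightarrow> nat \<Rightarrow> bool) \<Rightarrow> int" where
  "cycle_rank N adj = int (card (graph_edges N adj)) - int N + 1"

text \<open>For the graphs considered (connected,
  no vertex of degree 1, not a tree) one has r \<ge> 1, so r - 1 is a natural number.\<close>
definition ihara_zeta_inv :: "nat \<Rightarrow> (nat \<Rightarrow> nat \<Rightarrow> bool) \<Rightarrow> 'a :: comm_ring_1 \<Rightarrow> 'a" where
  "ihara_zeta_inv N adj u =
     (1 - u^2) ^ nat (cycle_rank N adj - 1) *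
     det (1\<^sub>m N - u \<cdot>\<^sub>m adj_matrix N adj + (u^2) \<cdot>\<^sub>m Q_matrix N adj)"

text \<open>Handcuff graph H_{m,n,l}: vertices 0..m-1 form C_m, vertices m..m+n-1 form C_n,
  and the path of l edges runs 0 = p_0, p_1, ..., p_l = m, with inner vertices
  p_k = m+n+k-1 (1 \<le> k \<le> l-1).\<close>
definition handcuff_nverts :: "nat \<Rightarrow> nat \<Rightarrow> nat \<Rightarrow> nat" where
  "handcuff_nverts m n l = m + n + l - 1"

definition handcuff_path_vertex :: "nat \<Rightarrow> nat \<Rightarrow> nat \<Rightarrow> nat \<Rightarrow> nat" where
  "handcuff_path_vertex m n l k = (if k = 0 then 0 else if k = l then m else m + n + k - 1)"

definition handcuff_adj :: "nat \<Rightarrow> nat \<Rightarrow> nat \<Rightarrow> nat \<Rightarrow> nat \<Rightarrow> bool" where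
  "handcuff_adj m n l i j =
     ((\<exists>k<m. {i, j} = {k, (k + 1) mod m})
    \<or> (\<exists>k<n. {i, j} = {m + k, m + (k + 1) mod n})
    \<or> (\<exists>k<l. {i, j} = {handcuff_path_vertex m n l k, handcuff_path_vertex m n l (k + 1)}))"

end

theory Submission
  imports Defs
begin

text \<open>Order the vertices along a chain: \<open>C\<^sub>m\<close> ending at its attachment vertex, then the
  handle, then \<open>C\<^sub>n\<close> starting at its attachment vertex. In this order \<open>I - A u + Q u\<^sup>2\<close> is
  tridiagonal up to the two entries closing the cycles, and the handle edge entering \<open>C\<^sub>n\<close> is the
  only coupling between a lollipop block (\<open>C\<^sub>m\<close> with the handle) and the \<open>C\<^sub>n\<close> block, so
  expanding along it splits the determinant into minors of these two blocks. Leading minors of a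
  tridiagonal matrix obey \<open>d(k + 2) = (1 + u\<^sup>2) d(k + 1) - u\<^sup>2 d(k)\<close>: paths give geometric sums in
  \<open>u\<^sup>2\<close>, lollipop minors are affine in such sums, and a cycle \<open>C\<^sub>k\<close> gives \<open>(1 - u\<^sup>k)\<^sup>2\<close>. With
  \<open>m + n + l\<close> edges on \<open>m + n + l - 1\<close> vertices we have \<open>r = 2\<close>, and the prefactor \<open>1 - u\<^sup>2\<close>
  telescopes every geometric sum, leaving
  \<open>(1 - u\<^sup>m)\<^sup>2 (1 - u\<^sup>n)\<^sup>2 - 4 u\<^bsup>m + n + 2 l\<^esup> (1 - u\<^sup>m) (1 - u\<^sup>n)\<close>.\<close>

section \<open>Determinants of matrices given by entry functions\<close>

definition square_mat :: "nat \<Rightarrow> (nat \<Rightarrow> nat \<Rightarrow> 'a) \<Rightarrow> 'a mat" where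
  "square_mat n f = mat n n (\<lambda>(i, j). f i j)"

lemma square_mat_carrier [simp]: "square_mat n f \<in> carrier_mat n n"
  by (simp add: square_mat_def)

lemma dim_square_mat [simp]: "dim_row (square_mat n f) = n" "dim_col (square_mat n f) = n"
  by (simp_all add: square_mat_def)

lemma index_square_mat [simp]: "i < n \<Longrightarrow> j < n \<Longrightarrow> square_mat n f $$ (i, j) = f i j"
  by (simp add: square_mat_def)

lemma square_mat_cong:
  "(\<And>i j. i < n \<Longrightarrow> j < n \<Longrightarrow> f i j = g i j) \<Longrightarrow> square_mat n f = square_mat n g"
  by (rule eq_matI) auto

lemma cofactor_square_mat:
  "cofactor (square_mat (Suc n) f) i j =
     (-1)^(i + j) * det (square_mat n (\<lambda>r s. f (insert_index i r) (insert_index j s)))"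
proof -
  have "mat_delete (square_mat (Suc n) f) i j =
      square_mat n (\<lambda>r s. f (insert_index i r) (insert_index j s))"
    by (rule eq_matI) (auto simp: mat_delete_def insert_index_def)
  then show ?thesis by (simp add: cofactor_def)
qed

lemma det_update_entry:
  fixes A B :: "'a :: comm_ring_1 mat"
  assumes A: "A \<in> carrier_mat n n" and B: "B \<in> carrier_mat n n" and i: "i < n" and j: "j < n"
    and eq: "\<And>r s. r < n \<Longrightarrow> s < n \<Longrightarrow> (r, s) \<noteq> (i, j) \<Longrightarrow> B $$ (r, s) = A $$ (r, s)"
  shows "det B = det A + (B $$ (i, j) - A $$ (i, j)) * cofactor A i j"
proof -
  have cof: "cofactor B i s = cofactor A i s" for s
  proof -
    have "mat_delete B i s = mat_delete A i s"
      using A B i by (intro eq_matI) (auto simp: mat_delete_def intro!: eq)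
    then show ?thesis by (simp add: cofactor_def)
  qed
  have "det B = (\<Sum>s<n. B $$ (i, s) * cofactor A i s)"
    using laplace_expansion_row[OF B i] by (simp add: cof)
  also have "\<dots> = (\<Sum>s<n. A $$ (i, s) * cofactor A i s
      + (if s = j then (B $$ (i, j) - A $$ (i, j)) * cofactor A i j else 0))"
    by (rule sum.cong) (auto simp: eq i algebra_simps)
  also have "\<dots> = det A + (B $$ (i, j) - A $$ (i, j)) * cofactor A i j"
    using laplace_expansion_row[OF A i] j by (simp add: sum.distrib)
  finally show ?thesis .
qed

lemma det_square_mat_update:
  fixes f g :: "nat \<Rightarrow> nat \<Rightarrow> 'a :: comm_ring_1"
  assumes "i < n" "j < n" "\<And>r s. r < n \<Longrightarrow> s < n \<Longrightarrow> (r, s) \<noteq> (i, j) \<Longrightarrow> g r s = f r s"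
  shows "det (square_mat n g) = det (square_mat n f) + (g i j - f i j) * cofactor (square_mat n f) i j"
  using det_update_entry[of "square_mat n f" n "square_mat n g" i j] assms by simp

lemma det_square_mat_zero_row:
  fixes f :: "nat \<Rightarrow> nat \<Rightarrow> 'a :: comm_ring_1"
  assumes "i < n" "\<And>j. j < n \<Longrightarrow> f i j = 0"
  shows "det (square_mat n f) = 0"
  using laplace_expansion_row[OF square_mat_carrier[of n f] assms(1)] assms by simp

lemma det_square_mat_lower_triangular:
  fixes f :: "nat \<Rightarrow> nat \<Rightarrow> 'a :: comm_ring_1"
  assumes "\<And>i j. i < j \<Longrightarrow> j < n \<Longrightarrow> f i j = 0"
  shows "det (square_mat n f) = (\<Prod>i<n. f i i)"
  using assms by (subst det_lower_triangular[of n])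
    (auto simp: prod_list_diag_prod atLeast0LessThan)

lemma det_square_mat_upper_triangular:
  fixes f :: "nat \<Rightarrow> nat \<Rightarrow> 'a :: comm_ring_1"
  assumes "\<And>i j. j < i \<Longrightarrow> i < n \<Longrightarrow> f i j = 0"
  shows "det (square_mat n f) = (\<Prod>i<n. f i i)"
  using assms by (subst det_upper_triangular[of _ n])
    (auto simp: upper_triangular_def prod_list_diag_prod atLeast0LessThan)

lemma det_square_mat_tridiagonal_step:
  fixes f :: "nat \<Rightarrow> nat \<Rightarrow> 'a :: comm_ring_1"
  assumes row: "\<And>j. j < k \<Longrightarrow> f (Suc k) j = 0" and col: "\<And>j. j < k \<Longrightarrow> f j (Suc k) = 0"
  shows "det (square_mat (Suc (Suc k)) f) = f (Suc k) (Suc k) * det (square_mat (Suc k) f)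
     - f k (Suc k) * f (Suc k) k * det (square_mat k f)"
proof -
  let ?A = "square_mat (Suc (Suc k)) f"
  let ?D = "square_mat (Suc k) (\<lambda>r s. f (insert_index k r) (insert_index (Suc k) s))"
  have minor: "det ?D = f (Suc k) k * det (square_mat k f)"
  proof -
    have "det ?D = (\<Sum>s<Suc k. ?D $$ (k, s) * cofactor ?D k s)"
      by (rule laplace_expansion_row) auto
    also have "\<dots> = (\<Sum>s\<in>{k}. ?D $$ (k, s) * cofactor ?D k s)"
      by (rule sum.mono_neutral_right) (auto simp: insert_index_def row)
    also have "\<dots> = f (Suc k) k * cofactor ?D k k"
      by (simp add: insert_index_def)
    also have "cofactor ?D k k = det (square_mat k f)"
      unfolding cofactor_square_mat
      by (simp, rule arg_cong[of _ _ det], rule square_mat_cong) (auto simp: insert_index_def)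
    finally show ?thesis .
  qed
  have "det ?A = (\<Sum>i<Suc (Suc k). ?A $$ (i, Suc k) * cofactor ?A i (Suc k))"
    by (rule laplace_expansion_column) auto
  also have "\<dots> = (\<Sum>i\<in>{k, Suc k}. ?A $$ (i, Suc k) * cofactor ?A i (Suc k))"
    by (rule sum.mono_neutral_right) (auto simp: col)
  also have "\<dots> = f k (Suc k) * cofactor ?A k (Suc k)
      + f (Suc k) (Suc k) * cofactor ?A (Suc k) (Suc k)"
    by simp
  also have "cofactor ?A (Suc k) (Suc k) = det (square_mat (Suc k) f)"
    unfolding cofactor_square_mat
    by (simp add: insert_index_def, rule arg_cong[of _ _ det], rule square_mat_cong) auto
  also have "cofactor ?A k (Suc k) = - det ?D"
    unfolding cofactor_square_mat by simp
  finally show ?thesis by (simp add: minor algebra_simps)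
qed

lemma det_square_mat_lower_block_triangular:
  fixes f :: "nat \<Rightarrow> nat \<Rightarrow> 'a :: idom"
  assumes "\<And>i j. i < a \<Longrightarrow> a \<le> j \<Longrightarrow> j < a + b \<Longrightarrow> f i j = 0"
  shows "det (square_mat (a + b) f) = det (square_mat a f) * det (square_mat b (\<lambda>i j. f (a + i) (a + j)))"
proof -
  have "square_mat (a + b) f = four_block_mat (square_mat a f) (0\<^sub>m a b)
      (mat b a (\<lambda>(i, j). f (a + i) j)) (square_mat b (\<lambda>i j. f (a + i) (a + j)))"
    by (rule eq_matI) (auto simp: assms)
  also have "det \<dots> = det (square_mat a f) * det (square_mat b (\<lambda>i j. f (a + i) (a + j)))"
    by (rule det_four_block_mat_upper_right_zero) auto
  finally show ?thesis .
qed

lemma det_square_mat_upper_block_triangular: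
  fixes f :: "nat \<Rightarrow> nat \<Rightarrow> 'a :: idom"
  assumes "\<And>i j. a \<le> i \<Longrightarrow> i < a + b \<Longrightarrow> j < a \<Longrightarrow> f i j = 0"
  shows "det (square_mat (a + b) f) = det (square_mat a f) * det (square_mat b (\<lambda>i j. f (a + i) (a + j)))"
proof -
  have "square_mat (a + b) f = four_block_mat (square_mat a f) (mat a b (\<lambda>(i, j). f i (a + j)))
      (0\<^sub>m b a) (square_mat b (\<lambda>i j. f (a + i) (a + j)))"
    by (rule eq_matI) (auto simp: assms)
  also have "det \<dots> = det (square_mat a f) * det (square_mat b (\<lambda>i j. f (a + i) (a + j)))"
    by (rule det_four_block_mat_lower_left_zero) auto
  finally show ?thesis .
qed

text \<open>Two diagonal blocks coupled only through the entries at \<open>(a, a + 1)\<close> and \<open>(a + 1, a)\<close>;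
  the coupling term deletes both coupled indices from both blocks.\<close>

lemma det_square_mat_bridge:
  fixes f :: "nat \<Rightarrow> nat \<Rightarrow> 'a :: idom"
  assumes upper: "\<And>i j. i < Suc a \<Longrightarrow> Suc a \<le> j \<Longrightarrow> j < Suc a + Suc b \<Longrightarrow> (i, j) \<noteq> (a, Suc a) \<Longrightarrow> f i j = 0"
    and lower: "\<And>i j. i < Suc a \<Longrightarrow> Suc a \<le> j \<Longrightarrow> j < Suc a + Suc b \<Longrightarrow> (i, j) \<noteq> (a, Suc a) \<Longrightarrow> f j i = 0"
  shows "det (square_mat (Suc a + Suc b) f) =
      det (square_mat (Suc a) f) * det (square_mat (Suc b) (\<lambda>i j. f (Suc a + i) (Suc a + j)))
    - f a (Suc a) * f (Suc a) a * det (square_mat a f)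
        * det (square_mat b (\<lambda>i j. f (Suc (Suc a) + i) (Suc (Suc a) + j)))"
proof -
  define N where "N = Suc a + Suc b"
  define g where "g = (\<lambda>i j. if i = a \<and> j = Suc a then 0 else f i j)"
  define h where "h = (\<lambda>r s. g (insert_index a r) (insert_index (Suc a) s))"
  define h' where "h' = (\<lambda>r s. if r = a \<and> s = a then 0 else h r s)"
  have entries: "g a (Suc a) = 0" "h a a = f (Suc a) a" "h' a a = 0"
    by (auto simp: h'_def h_def g_def insert_index_def)
  have split_g: "det (square_mat N f) =
      det (square_mat N g) + (f a (Suc a) - g a (Suc a)) * cofactor (square_mat N g) a (Suc a)"
    by (rule det_square_mat_update) (auto simp: N_def g_def)
  have det_g: "det (square_mat N g) =
      det (square_mat (Suc a) f) * det (square_mat (Suc b) (\<lambda>i j. f (Suc a + i) (Suc a + j)))"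
    unfolding N_def
    by (subst det_square_mat_lower_block_triangular)
      (auto simp: g_def upper intro!: arg_cong2[of _ _ _ _ "(*)"] arg_cong[of _ _ det] square_mat_cong)
  have cof_g: "cofactor (square_mat N g) a (Suc a) = - det (square_mat (Suc a + b) h)"
    unfolding N_def h_def by (simp add: cofactor_square_mat)
  have split_h: "det (square_mat (Suc a + b) h) =
      det (square_mat (Suc a + b) h') + (h a a - h' a a) * cofactor (square_mat (Suc a + b) h') a a"
    by (rule det_square_mat_update) (auto simp: h'_def)
  have "det (square_mat (Suc a + b) h') = det (square_mat (Suc a) h') * det (square_mat b (\<lambda>i j. h' (Suc a + i) (Suc a + j)))"
    by (rule det_square_mat_upper_block_triangular)
      (force simp: h'_def h_def g_def insert_index_def intro!: lower)
  moreover have "det (square_mat (Suc a) h') = 0"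
    by (rule det_square_mat_zero_row[of a]) (auto simp: h'_def h_def g_def insert_index_def intro!: lower)
  ultimately have det_h': "det (square_mat (Suc a + b) h') = 0"
    by simp
  have "cofactor (square_mat (Suc a + b) h') a a = det (square_mat (a + b) (\<lambda>r s. h' (insert_index a r) (insert_index a s)))"
    by (simp only: add_Suc cofactor_square_mat) simp
  also have "\<dots> = det (square_mat a f) * det (square_mat b (\<lambda>i j. f (Suc (Suc a) + i) (Suc (Suc a) + j)))"
    by (subst det_square_mat_lower_block_triangular)
      (force simp: h'_def h_def g_def insert_index_def intro!: upper,
       auto simp: h'_def h_def g_def insert_index_def
         intro!: arg_cong2[of _ _ _ _ "(*)"] arg_cong[of _ _ det] square_mat_cong)
  finally have cof_h': "cofactor (square_mat (Suc a + b) h') a a =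
      det (square_mat a f) * det (square_mat b (\<lambda>i j. f (Suc (Suc a) + i) (Suc (Suc a) + j)))" .
  show ?thesis
    unfolding N_def[symmetric] split_g det_g cof_g split_h det_h' cof_h' entries by (simp add: algebra_simps)
qed

lemma det_square_mat_permute:
  fixes f :: "nat \<Rightarrow> nat \<Rightarrow> 'a :: comm_ring_1"
  assumes p: "p permutes {0..<n}"
  shows "det (square_mat n (\<lambda>i j. f (p i) (p j))) = det (square_mat n f)"
proof -
  let ?A = "square_mat n f"
  define B where "B = mat n n (\<lambda>(i, j). ?A $$ (p i, j))"
  define C where "C = mat n n (\<lambda>(i, j). transpose_mat B $$ (p i, j))"
  have B: "B \<in> carrier_mat n n" unfolding B_def by simp
  have det_B: "det B = signof p * det ?A"
    unfolding B_def by (rule det_permute_rows[OF square_mat_carrier p])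
  have det_C: "det C = signof p * det (transpose_mat B)"
    unfolding C_def by (rule det_permute_rows) (use B p in auto)
  have p_lt: "i < n \<Longrightarrow> p i < n" for i
    using permutes_in_image[OF p] by auto
  have "square_mat n (\<lambda>i j. f (p i) (p j)) = transpose_mat C"
    by (rule eq_matI) (auto simp: C_def B_def p_lt)
  then have "det (square_mat n (\<lambda>i j. f (p i) (p j))) = det C"
    using det_transpose[of C n] by (simp add: C_def)
  also have "\<dots> = signof p * signof p * det ?A"
    by (simp add: det_C det_transpose[OF B] det_B)
  also have "signof p * signof p = (1 :: 'a)"
    by (simp add: sign_def)
  finally show ?thesis by simp
qed

section \<open>Paths and cycles\<close>

lemma continuant_closed_form:
  fixes d :: "nat \<Rightarrow> 'a :: comm_ring_1"
  assumes d0: "d 0 = a" and d1: "d 1 = a + b"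
    and step: "\<And>j. j + 2 \<le> N \<Longrightarrow> d (j + 2) = (1 + x) * d (j + 1) - x * d j"
  shows "j \<le> N \<Longrightarrow> d j = a + b * (\<Sum>i<j. x ^ i)"
proof (induction j rule: less_induct)
  case (less j)
  show ?case
  proof (cases "j < 2")
    case True
    then consider "j = 0" | "j = 1" by linarith
    then show ?thesis using d0 d1 by cases auto
  next
    case False
    then obtain i where j: "j = i + 2"
      by (metis add.commute le_add_diff_inverse not_less)
    have "d j = (1 + x) * d (i + 1) - x * d i"
      using step less.prems j by simp
    also have "\<dots> = (1 + x) * (a + b * (\<Sum>k<i + 1. x ^ k)) - x * (a + b * (\<Sum>k<i. x ^ k))"
      using less.IH less.prems j by simp
    also have "\<dots> = a + b * (\<Sum>k<j. x ^ k)"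
      using j by (simp add: algebra_simps)
    finally show ?thesis .
  qed
qed

lemma geometric_sum_Suc_shift:
  fixes x :: "'a :: comm_ring_1"
  shows "(\<Sum>i<Suc n. x ^ i) = 1 + x * (\<Sum>i<n. x ^ i)"
  by (subst sum.lessThan_Suc_shift) (simp add: sum_distrib_left)

lemma geometric_sum_gap:
  fixes x :: "'a :: comm_ring_1"
  shows "(\<Sum>i<n + 2. x ^ i) - x * (\<Sum>i<n. x ^ i) = 1 + x ^ (n + 1)"
proof -
  have "(\<Sum>i<n + 2. x ^ i) = 1 + x * (\<Sum>i<n + 1. x ^ i)"
    using geometric_sum_Suc_shift[of x "n + 1"] by simp
  also have "\<dots> = 1 + x * (\<Sum>i<n. x ^ i) + x ^ (n + 1)"
    by (simp add: algebra_simps)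
  finally show ?thesis by simp
qed

lemma geometric_sum_square:
  fixes u :: "'a :: comm_ring_1"
  shows "(1 - u^2) * (\<Sum>i<j. (u^2) ^ i) = 1 - (u ^ j)^2"
  by (metis one_diff_power_eq power_mult mult.commute)

text \<open>The entries of \<open>I - A u + Q u\<^sup>2\<close> along a chain of vertices of degree 2.\<close>

definition path_entry :: "'a :: comm_ring_1 \<Rightarrow> nat \<Rightarrow> nat \<Rightarrow> 'a" where
  "path_entry u i j = (if i = j then 1 + u^2 else if i = Suc j \<or> j = Suc i then - u else 0)"

lemma det_path_matrix:
  fixes u :: "'a :: comm_ring_1"
  shows "det (square_mat k (path_entry u)) = (\<Sum>i<Suc k. (u^2) ^ i)"
proof -
  have "det (square_mat k (path_entry u)) = 1 + u^2 * (\<Sum>i<k. (u^2) ^ i)"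
  proof (rule continuant_closed_form[where d = "\<lambda>k. det (square_mat k (path_entry u))" and N = k])
    show "det (square_mat 0 (path_entry u)) = 1"
      by (simp add: square_mat_def)
    show "det (square_mat 1 (path_entry u)) = 1 + u^2"
      by (subst det_single) (auto simp: path_entry_def)
    show "det (square_mat (j + 2) (path_entry u)) =
        (1 + u^2) * det (square_mat (j + 1) (path_entry u)) - u^2 * det (square_mat j (path_entry u))" for j
      by (simp, subst det_square_mat_tridiagonal_step) (auto simp: path_entry_def power2_eq_square)
  qed simp
  then show ?thesis
    by (simp only: geometric_sum_Suc_shift)
qed

definition cycle_entry :: "'a :: comm_ring_1 \<Rightarrow> nat \<Rightarrow> nat \<Rightarrow> nat \<Rightarrow> 'a" where
  "cycle_entry u k i j = (if i = j then 1 + u^2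
     else if i = Suc j \<or> j = Suc i \<or> (i = 0 \<and> j = k - 1) \<or> (i = k - 1 \<and> j = 0) then - u else 0)"

text \<open>The cycle matrix is the path matrix plus its two corner entries, each added by one cofactor
  expansion; the triangular minors this produces contribute \<open>u\<^sup>k\<close> twice.\<close>

definition path_corner_entry :: "'a :: comm_ring_1 \<Rightarrow> nat \<Rightarrow> nat \<Rightarrow> nat \<Rightarrow> 'a" where
  "path_corner_entry u k i j = (if i = k - 1 \<and> j = 0 then - u else path_entry u i j)"

lemma det_path_corner_matrix:
  fixes u :: "'a :: comm_ring_1"
  assumes "3 \<le> k"
  shows "det (square_mat k (path_corner_entry u k)) = det (square_mat k (path_entry u)) - u ^ k"
proof -
  define q where "q = k - 3"
  have k: "k = Suc (Suc (Suc q))"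
    using assms by (simp add: q_def)
  have cof: "cofactor (square_mat k (path_entry u)) (k - 1) 0 = u ^ (q + 2)"
  proof -
    have "cofactor (square_mat k (path_entry u)) (k - 1) 0 = (-1) ^ (q + 2)
        * det (square_mat (q + 2) (\<lambda>r s. path_entry u (insert_index (q + 2) r) (insert_index 0 s)))"
      unfolding k by (simp add: cofactor_square_mat)
    also have "det (square_mat (q + 2) (\<lambda>r s. path_entry u (insert_index (q + 2) r) (insert_index 0 s)))
        = (- u) ^ (q + 2)"
      by (subst det_square_mat_lower_triangular) (auto simp: path_entry_def insert_index_def)
    also have "(-1) ^ (q + 2) * (- u) ^ (q + 2) = u ^ (q + 2)"
      by (subst power_mult_distrib[symmetric]) simp
    finally show ?thesis .
  qed
  have "det (square_mat k (path_corner_entry u k)) = det (square_mat k (path_entry u))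
      + (path_corner_entry u k (k - 1) 0 - path_entry u (k - 1) 0) * cofactor (square_mat k (path_entry u)) (k - 1) 0"
    by (rule det_square_mat_update) (auto simp: path_corner_entry_def k)
  also have "path_corner_entry u k (k - 1) 0 - path_entry u (k - 1) 0 = - u"
    using assms by (simp add: path_corner_entry_def path_entry_def)
  finally show ?thesis
    by (simp only: cof) (simp add: k)
qed

lemma cofactor_path_corner_matrix:
  fixes u :: "'a :: comm_ring_1"
  assumes "3 \<le> k"
  shows "cofactor (square_mat k (path_corner_entry u k)) 0 (k - 1)
    = u ^ (k - 1) + u * det (square_mat (k - 2) (path_entry u))"
proof -
  define q where "q = k - 3"
  have k: "k = Suc (Suc (Suc q))"
    using assms by (simp add: q_def)
  define P where "P j = det (square_mat j (path_entry u))" for j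
  define U' where "U' = (\<lambda>r s. path_corner_entry u k (insert_index 0 r) (insert_index (q + 2) s))"
  define U where "U = (\<lambda>r s. if r = Suc q \<and> s = 0 then 0 else U' r s)"
  have det_U: "det (square_mat (Suc (Suc q)) U) = (- u) ^ (q + 2)"
    by (subst det_square_mat_upper_triangular)
      (auto simp: U_def U'_def path_corner_entry_def k path_entry_def insert_index_def)
  have cof_U: "cofactor (square_mat (Suc (Suc q)) U) (Suc q) 0 = (-1) ^ Suc q * P (Suc q)"
  proof -
    have "square_mat (Suc q) (\<lambda>r s. U (insert_index (Suc q) r) (insert_index 0 s))
        = square_mat (Suc q) (path_entry u)"
      by (rule square_mat_cong)
        (auto simp: U_def U'_def path_corner_entry_def k path_entry_def insert_index_def)
    then show ?thesis by (simp add: cofactor_square_mat P_def)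
  qed
  have det_U': "det (square_mat (Suc (Suc q)) U') = (- u) ^ (q + 2) - u * ((-1) ^ Suc q * P (Suc q))"
  proof -
    have "det (square_mat (Suc (Suc q)) U') = det (square_mat (Suc (Suc q)) U)
        + (U' (Suc q) 0 - U (Suc q) 0) * cofactor (square_mat (Suc (Suc q)) U) (Suc q) 0"
      by (rule det_square_mat_update) (auto simp: U_def)
    also have "U' (Suc q) 0 - U (Suc q) 0 = - u"
      by (simp add: U_def U'_def path_corner_entry_def k insert_index_def)
    finally show ?thesis by (simp only: det_U cof_U) simp
  qed
  have "cofactor (square_mat k (path_corner_entry u k)) 0 (k - 1)
      = (-1) ^ (q + 2) * det (square_mat (Suc (Suc q)) U')"
    unfolding k U'_def by (simp add: cofactor_square_mat)
  also have "\<dots> = ((-1) ^ (q + 2) * (- u) ^ (q + 2)) - u * P (Suc q) * ((-1) ^ (q + 2) * (-1) ^ Suc q)"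
    unfolding det_U' right_diff_distrib by (simp only: ac_simps)
  also have "(-1) ^ (q + 2) * (- u) ^ (q + 2) = u ^ (q + 2)"
    by (subst power_mult_distrib[symmetric]) simp
  also have "(-1) ^ (q + 2) * (-1) ^ Suc q = (-1 :: 'a)"
    by simp
  finally show ?thesis
    by (simp add: P_def k)
qed

lemma det_cycle_matrix:
  fixes u :: "'a :: comm_ring_1"
  assumes k: "3 \<le> k"
  shows "det (square_mat k (cycle_entry u k)) = (1 - u ^ k)^2"
proof -
  define P where "P j = det (square_mat j (path_entry u))" for j
  have "det (square_mat k (cycle_entry u k)) = det (square_mat k (path_corner_entry u k))
      + (cycle_entry u k 0 (k - 1) - path_corner_entry u k 0 (k - 1))
        * cofactor (square_mat k (path_corner_entry u k)) 0 (k - 1)"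
    using k by (intro det_square_mat_update) (auto simp: path_corner_entry_def path_entry_def cycle_entry_def)
  also have "cycle_entry u k 0 (k - 1) - path_corner_entry u k 0 (k - 1) = - u"
    using k by (simp add: path_corner_entry_def cycle_entry_def path_entry_def)
  also have "det (square_mat k (path_corner_entry u k)) + - u * cofactor (square_mat k (path_corner_entry u k)) 0 (k - 1)
      = (P k - u^2 * P (k - 2)) - 2 * u ^ k"
  proof -
    have "u * u ^ (k - 1) = u ^ k"
      using k by (simp flip: power_Suc)
    then show ?thesis
      unfolding det_path_corner_matrix[OF k] cofactor_path_corner_matrix[OF k] P_def
      by (simp add: algebra_simps power2_eq_square)
  qed
  also have "P k - u^2 * P (k - 2) = 1 + (u^2) ^ k"
  proof -
    have "Suc k = k - 1 + 2" "Suc (k - 2) = k - 1" "k - 1 + 1 = k"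
      using k by auto
    then show ?thesis
      using geometric_sum_gap[of "u^2" "k - 1"] unfolding P_def det_path_matrix by simp
  qed
  also have "(u^2) ^ k = u ^ k * u ^ k"
    by (simp only: power2_eq_square power_mult_distrib)
  finally show ?thesis
    by (simp add: power2_eq_square algebra_simps)
qed

text \<open>A cycle vertex of degree 3 only changes its diagonal entry to \<open>1 + 2 u\<^sup>2\<close>; deleting a
  vertex of the cycle leaves a path.\<close>

lemma det_cycle_matrix_attached:
  fixes u :: "'a :: comm_ring_1"
  assumes k: "3 \<le> k" and v: "v = 0 \<or> v = k - 1"
  shows "det (square_mat k (\<lambda>i j. if i = j \<and> i = v then 1 + 2 * u^2 else cycle_entry u k i j))
    = (1 - u ^ k)^2 + u^2 * (\<Sum>i<k. (u^2) ^ i)"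
proof -
  define G where "G = (\<lambda>i j. if i = j \<and> i = v then 1 + 2 * u^2 else cycle_entry u k i j)"
  define q where "q = k - 1"
  have q: "k = Suc q"
    using k by (simp add: q_def)
  have "square_mat q (\<lambda>r s. cycle_entry u k (insert_index v r) (insert_index v s)) = square_mat q (path_entry u)"
    using v k by (intro square_mat_cong) (auto simp: q cycle_entry_def path_entry_def insert_index_def)
  then have cof: "cofactor (square_mat k (cycle_entry u k)) v v = (\<Sum>i<k. (u^2) ^ i)"
    by (simp add: q cofactor_square_mat det_path_matrix power_add flip: mult_2)
  have "det (square_mat k G) = det (square_mat k (cycle_entry u k))
      + (G v v - cycle_entry u k v v) * cofactor (square_mat k (cycle_entry u k)) v v"
    using v k by (intro det_square_mat_update) (auto simp: G_def)
  then show ?thesis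
    by (simp add: G_def det_cycle_matrix[OF k] cof cycle_entry_def)
qed

section \<open>The handcuff graph in chain order\<close>

text \<open>The handcuff graph with its vertices relabelled along a chain: \<open>C\<^sub>m\<close> is \<open>0, \<dots>, m - 1\<close>
  (closed by the edge \<open>{0, m - 1}\<close>), the handle runs \<open>m - 1, m, \<dots>, m + l - 1\<close>, and \<open>C\<^sub>n\<close>
  is \<open>m + l - 1, \<dots>, m + n + l - 2\<close> (closed by \<open>{m + l - 1, m + n + l - 2}\<close>).\<close>

definition chain_adj :: "nat \<Rightarrow> nat \<Rightarrow> nat \<Rightarrow> nat \<Rightarrow> nat \<Rightarrow> bool" where
  "chain_adj m n l i j =
     (i = Suc j \<or> j = Suc i \<or> (i = 0 \<and> j = m - 1) \<or> (i = m - 1 \<and> j = 0)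
      \<or> (i = m + l - 1 \<and> j = m + n + l - 2) \<or> (i = m + n + l - 2 \<and> j = m + l - 1))"

definition chain_entry :: "nat \<Rightarrow> nat \<Rightarrow> nat \<Rightarrow> 'a :: comm_ring_1 \<Rightarrow> nat \<Rightarrow> nat \<Rightarrow> 'a" where
  "chain_entry m n l u i j =
     (if i = j then (if i = m - 1 \<or> i = m + l - 1 then 1 + 2 * u^2 else 1 + u^2)
      else if chain_adj m n l i j then - u else 0)"

lemma handcuff_adj_sym: "handcuff_adj m n l x y = handcuff_adj m n l y x"
  unfolding handcuff_adj_def by (simp add: insert_commute)

lemma chain_adj_sym: "chain_adj m n l i j = chain_adj m n l j i"
  unfolding chain_adj_def by auto

lemma Suc_mod_if: "k < p \<Longrightarrow> Suc k mod p = (if Suc k = p then 0 else Suc k)"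
  by (cases "Suc k = p") auto

lemma double_card_graph_edges:
  assumes sym: "\<And>x y. adj x y = adj y x" and irrefl: "\<And>x. \<not> adj x x"
  shows "2 * card (graph_edges N adj) = (\<Sum>x<N. graph_degree N adj x)"
proof -
  define E where "E = graph_edges N adj"
  define S where "S = {(x, y). x < N \<and> y < N \<and> adj x y}"
  have "card S = (\<Sum>x<N. graph_degree N adj x)"
  proof -
    have "S = Sigma {..<N} (\<lambda>x. {y. y < N \<and> adj x y})"
      unfolding S_def by auto
    then show ?thesis
      unfolding graph_degree_def by (simp add: card_SigmaI)
  qed
  moreover have "S = E \<union> prod.swap ` E"
  proof
    show "S \<subseteq> E \<union> prod.swap ` E"
    proof
      fix p assume "p \<in> S"
      then obtain a b where p: "p = (a, b)" "a < N" "b < N" "adj a b"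
        unfolding S_def by auto
      then consider "a < b" | "b < a"
        using irrefl by (metis linorder_neqE_nat)
      then show "p \<in> E \<union> prod.swap ` E"
      proof cases
        case 2
        then have "(b, a) \<in> E"
          using p sym unfolding E_def graph_edges_def by auto
        then show ?thesis
          using p by force
      qed (use p in \<open>auto simp: E_def graph_edges_def\<close>)
    qed
    show "E \<union> prod.swap ` E \<subseteq> S"
      unfolding S_def E_def graph_edges_def using sym by auto
  qed
  moreover have "finite E"
    unfolding E_def graph_edges_def by (rule finite_subset[of _ "{..<N} \<times> {..<N}"]) auto
  moreover have "E \<inter> prod.swap ` E = {}"
    unfolding E_def graph_edges_def by auto
  ultimately show ?thesis
    by (simp add: card_Un_disjoint card_image E_def)
qed

text \<open>From chain order to the labelling of \<open>handcuff_adj\<close>: \<open>C\<^sub>m\<close> is rotated so that chain vertex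
  \<open>m - 1\<close> becomes the attachment vertex \<open>0\<close>, inner handle vertices keep their order, and \<open>C\<^sub>n\<close>
  is shifted down to \<open>m, \<dots>, m + n - 1\<close>.\<close>

definition chain_to_handcuff :: "nat \<Rightarrow> nat \<Rightarrow> nat \<Rightarrow> nat \<Rightarrow> nat" where
  "chain_to_handcuff m n l i =
     (if i < m - 1 then i + 1 else if i = m - 1 then 0 else if i < m + l - 1 then i + n
      else if i < m + n + l - 1 then i - (l - 1) else i)"

definition handcuff_to_chain :: "nat \<Rightarrow> nat \<Rightarrow> nat \<Rightarrow> nat \<Rightarrow> nat" where
  "handcuff_to_chain m n l x =
     (if x = 0 then m - 1 else if x < m then x - 1 else if x < m + n then x + l - 1
      else if x < m + n + l - 1 then x - n else x)"

text \<open>The final cancellation: \<open>x = u\<^sup>2\<close>, \<open>A = u\<^sup>m\<close>, \<open>B = u\<^sup>n\<close>, \<open>y = x\<^bsup>l - 1\<^esup>\<close>, and \<open>Sm\<close>, \<open>Sn\<close>, \<open>G\<close>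
  are the geometric sums of \<open>x\<close> with \<open>m\<close>, \<open>n\<close> and \<open>l - 1\<close> terms.\<close>

lemma handcuff_det_identity:
  fixes x y A B Sm Sn G :: "'a :: comm_ring_1"
  assumes Sm: "(1 - x) * Sm = 1 - A^2" and Sn: "(1 - x) * Sn = 1 - B^2" and G: "(1 - x) * G = 1 - y"
  shows "(1 - x) * ((Sm - 2 * A * (1 - A) * (G + y)) * ((1 - B)^2 + x * Sn)
      - x * (Sm - 2 * A * (1 - A) * G) * Sn)
    = (1 - A)^2 * (1 - B)^2 - 4 * A * B * (1 - A) * (1 - B) * x * y"
proof -
  have "(1 - x) * ((Sm - 2 * A * (1 - A) * (G + y)) * ((1 - B)^2 + x * Sn)
      - x * (Sm - 2 * A * (1 - A) * G) * Sn)
    = ((1 - x) * Sm) * (1 - B)^2 - 2 * A * (1 - A) * ((1 - x) * G + (1 - x) * y) * (1 - B)^2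
      - 2 * A * (1 - A) * x * y * ((1 - x) * Sn)"
    by (simp add: algebra_simps)
  also have "\<dots> = (1 - A)^2 * (1 - B)^2 - 4 * A * B * (1 - A) * (1 - B) * x * y"
    unfolding Sm Sn G by (simp add: algebra_simps power2_eq_square)
  finally show ?thesis .
qed

context
  fixes m n l :: nat
  assumes m: "3 \<le> m" and n: "3 \<le> n" and l: "1 \<le> l"
begin

text \<open>The leading minors through the handle: the cycle \<open>C\<^sub>m\<close> followed by the first \<open>j\<close>
  handle vertices.\<close>

lemma det_lollipop:
  fixes u :: "'a :: comm_ring_1"
  assumes "j \<le> l"
  shows "det (square_mat (m - 1 + j) (chain_entry m n l u))
    = (\<Sum>i<m. (u^2) ^ i) - 2 * u ^ m * (1 - u ^ m) * (\<Sum>i<j. (u^2) ^ i)"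
proof -
  have "det (square_mat (m - 1 + j) (chain_entry m n l u))
    = (\<Sum>i<m. (u^2) ^ i) + - 2 * u ^ m * (1 - u ^ m) * (\<Sum>i<j. (u^2) ^ i)"
  proof (rule continuant_closed_form[where d = "\<lambda>j. det (square_mat (m - 1 + j) (chain_entry m n l u))"
      and N = l, OF _ _ _ assms])
    have "square_mat (m - 1) (chain_entry m n l u) = square_mat (m - 1) (path_entry u)"
      using m n l by (intro square_mat_cong) (auto simp: chain_entry_def chain_adj_def path_entry_def)
    then show "det (square_mat (m - 1 + 0) (chain_entry m n l u)) = (\<Sum>i<m. (u^2) ^ i)"
      using m by (simp add: det_path_matrix)
  next
    have "square_mat m (chain_entry m n l u)
        = square_mat m (\<lambda>i j. if i = j \<and> i = m - 1 then 1 + 2 * u^2 else cycle_entry u m i j)"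
      using m n l by (intro square_mat_cong) (auto simp: chain_entry_def chain_adj_def cycle_entry_def)
    then have "det (square_mat m (chain_entry m n l u)) = (1 - u ^ m)^2 + u^2 * (\<Sum>i<m. (u^2) ^ i)"
      by (simp add: det_cycle_matrix_attached[OF m])
    also have "\<dots> = (\<Sum>i<m. (u^2) ^ i) - 2 * u ^ m * (1 - u ^ m)"
    proof -
      have "(1 - u^2) * (\<Sum>i<m. (u^2) ^ i) = 1 - (u ^ m)^2"
        by (rule geometric_sum_square)
      then show ?thesis
        by (simp add: algebra_simps power2_eq_square)
    qed
    finally show "det (square_mat (m - 1 + 1) (chain_entry m n l u))
        = (\<Sum>i<m. (u^2) ^ i) + - 2 * u ^ m * (1 - u ^ m)"
      using m by simp
  next
    fix j assume j: "j + 2 \<le> l"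
    define k where "k = m + j - 1"
    have "det (square_mat (Suc (Suc k)) (chain_entry m n l u))
        = chain_entry m n l u (Suc k) (Suc k) * det (square_mat (Suc k) (chain_entry m n l u))
          - chain_entry m n l u k (Suc k) * chain_entry m n l u (Suc k) k * det (square_mat k (chain_entry m n l u))"
      using m n j by (intro det_square_mat_tridiagonal_step) (auto simp: chain_entry_def chain_adj_def k_def)
    moreover have "chain_entry m n l u (Suc k) (Suc k) = 1 + u^2"
      "chain_entry m n l u k (Suc k) = - u" "chain_entry m n l u (Suc k) k = - u"
      using m n j by (auto simp: chain_entry_def chain_adj_def k_def)
    moreover have "Suc (Suc k) = m - 1 + (j + 2)" "Suc k = m - 1 + (j + 1)" "k = m - 1 + j"
      using m by (auto simp: k_def)
    ultimately show "det (square_mat (m - 1 + (j + 2)) (chain_entry m n l u))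
        = (1 + u^2) * det (square_mat (m - 1 + (j + 1)) (chain_entry m n l u))
          - u^2 * det (square_mat (m - 1 + j) (chain_entry m n l u))"
      by (simp add: power2_eq_square)
  qed
  then show ?thesis by simp
qed

lemma chain_adj_second_cycle:
  assumes i: "i < n" and j: "j < n"
  shows "chain_adj m n l (m + l - 1 + i) (m + l - 1 + j)
    \<longleftrightarrow> i = Suc j \<or> j = Suc i \<or> (i = 0 \<and> j = n - 1) \<or> (i = n - 1 \<and> j = 0)"
proof -
  have "(m + l - 1 + i = 0) = False" "(m + l - 1 + j = 0) = False"
    "(m + l - 1 + i = m - 1) = False" "(m + l - 1 + j = m - 1) = False"
    "(m + l - 1 + i = m + l - 1) = (i = 0)" "(m + l - 1 + j = m + l - 1) = (j = 0)"
    "(m + l - 1 + i = m + n + l - 2) = (i = n - 1)" "(m + l - 1 + j = m + n + l - 2) = (j = n - 1)"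
    "(m + l - 1 + i = Suc (m + l - 1 + j)) = (i = Suc j)" "(m + l - 1 + j = Suc (m + l - 1 + i)) = (j = Suc i)"
    using m n l i j by auto
  then show ?thesis
    unfolding chain_adj_def by simp
qed

lemma det_chain_second_cycle:
  fixes u :: "'a :: comm_ring_1"
  shows "det (square_mat n (\<lambda>i j. chain_entry m n l u (m + l - 1 + i) (m + l - 1 + j)))
    = (1 - u ^ n)^2 + u^2 * (\<Sum>i<n. (u^2) ^ i)"
proof -
  have "square_mat n (\<lambda>i j. chain_entry m n l u (m + l - 1 + i) (m + l - 1 + j))
      = square_mat n (\<lambda>i j. if i = j \<and> i = 0 then 1 + 2 * u^2 else cycle_entry u n i j)"
  proof (rule square_mat_cong)
    fix i j assume i: "i < n" and j: "j < n"
    have "(m + l - 1 + i = m - 1) = False" "(m + l - 1 + i = m + l - 1) = (i = 0)"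
      "(m + l - 1 + i = m + l - 1 + j) = (i = j)"
      using m l by auto
    then show "chain_entry m n l u (m + l - 1 + i) (m + l - 1 + j)
        = (if i = j \<and> i = 0 then 1 + 2 * u^2 else cycle_entry u n i j)"
      unfolding chain_entry_def chain_adj_second_cycle[OF i j] cycle_entry_def by auto
  qed
  then show ?thesis
    by (simp add: det_cycle_matrix_attached[OF n])
qed

lemma det_chain_second_path:
  fixes u :: "'a :: comm_ring_1"
  shows "det (square_mat (n - 1) (\<lambda>i j. chain_entry m n l u (m + l + i) (m + l + j)))
    = (\<Sum>i<n. (u^2) ^ i)"
proof -
  have "square_mat (n - 1) (\<lambda>i j. chain_entry m n l u (m + l + i) (m + l + j))
      = square_mat (n - 1) (path_entry u)"
    using m n l by (intro square_mat_cong) (auto simp: chain_entry_def chain_adj_def path_entry_def)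
  then show ?thesis
    using n by (simp add: det_path_matrix)
qed

lemma det_chain_matrix_split:
  fixes u :: "'a :: idom"
  shows "det (square_mat (m + n + l - 1) (chain_entry m n l u))
    = det (square_mat (m - 1 + l) (chain_entry m n l u))
        * det (square_mat n (\<lambda>i j. chain_entry m n l u (m + l - 1 + i) (m + l - 1 + j)))
      - u^2 * det (square_mat (m - 1 + (l - 1)) (chain_entry m n l u))
        * det (square_mat (n - 1) (\<lambda>i j. chain_entry m n l u (m + l + i) (m + l + j)))"
proof -
  let ?F = "chain_entry m n l u"
  define a where "a = m + l - 2"
  define b where "b = n - 1"
  have bridge: "det (square_mat (Suc a + Suc b) ?F)
      = det (square_mat (Suc a) ?F) * det (square_mat (Suc b) (\<lambda>i j. ?F (Suc a + i) (Suc a + j)))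
        - ?F a (Suc a) * ?F (Suc a) a * det (square_mat a ?F)
          * det (square_mat b (\<lambda>i j. ?F (Suc (Suc a) + i) (Suc (Suc a) + j)))"
    using m n l by (intro det_square_mat_bridge) (auto simp: chain_entry_def chain_adj_def a_def b_def)
  have entries: "?F a (Suc a) = - u" "?F (Suc a) a = - u"
    using m n l by (auto simp: chain_entry_def chain_adj_def a_def)
  have sizes: "Suc a + Suc b = m + n + l - 1" "Suc a = m - 1 + l" "Suc a = m + l - 1"
    "a = m - 1 + (l - 1)" "Suc b = n" "b = n - 1" "Suc (Suc a) = m + l"
    using m n l by (auto simp: a_def b_def)
  have whole: "square_mat (Suc a + Suc b) ?F = square_mat (m + n + l - 1) ?F"
    by (simp only: sizes(1))
  have lollipop: "square_mat (Suc a) ?F = square_mat (m - 1 + l) ?F"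
    by (simp only: sizes(2))
  have cycle: "square_mat (Suc b) (\<lambda>i j. ?F (Suc a + i) (Suc a + j))
      = square_mat n (\<lambda>i j. ?F (m + l - 1 + i) (m + l - 1 + j))"
    by (simp only: sizes(3, 5))
  have lollipop_short: "square_mat a ?F = square_mat (m - 1 + (l - 1)) ?F"
    by (simp only: sizes(4))
  have path: "square_mat b (\<lambda>i j. ?F (Suc (Suc a) + i) (Suc (Suc a) + j))
      = square_mat (n - 1) (\<lambda>i j. ?F (m + l + i) (m + l + j))"
    by (simp only: sizes(6, 7))
  show ?thesis
    using bridge unfolding whole lollipop cycle lollipop_short path entries by (simp add: power2_eq_square)
qed

lemma det_chain_matrix:
  fixes u :: "'a :: idom"
  shows "(1 - u^2) * det (square_mat (m + n + l - 1) (chain_entry m n l u))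
    = (1 - u ^ m)^2 * (1 - u ^ n)^2 - 4 * u ^ (m + n + 2 * l) * (1 - u ^ m) * (1 - u ^ n)"
proof -
  define k where "k = l - 1"
  have k: "l = Suc k"
    using l by (simp add: k_def)
  have square_power: "(u^2) ^ j = (u ^ j)^2" for j
    by (metis power_mult mult.commute)
  have "(1 - u^2) * det (square_mat (m + n + l - 1) (chain_entry m n l u))
      = (1 - u ^ m)^2 * (1 - u ^ n)^2 - 4 * (u ^ m * u ^ n * u^2 * (u ^ k)^2) * (1 - u ^ m) * (1 - u ^ n)"
    unfolding det_chain_matrix_split det_chain_second_cycle det_chain_second_path
      det_lollipop[OF order.refl] det_lollipop[where j = "l - 1", OF diff_le_self]
    using handcuff_det_identity[where x = "u^2" and A = "u ^ m" and B = "u ^ n" and y = "(u ^ k)^2"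
        and Sm = "\<Sum>i<m. (u^2) ^ i" and Sn = "\<Sum>i<n. (u^2) ^ i" and G = "\<Sum>i<k. (u^2) ^ i",
        OF geometric_sum_square geometric_sum_square geometric_sum_square]
    by (simp add: k square_power)
  also have "u ^ m * u ^ n * u^2 * (u ^ k)^2 = u ^ (m + n + 2 * l)"
    unfolding k by (simp add: power_add power_mult algebra_simps power2_eq_square)
  finally show ?thesis .
qed

section \<open>Relabelling and the zeta function\<close>

lemma chain_to_handcuff_lt: "i < m + n + l - 1 \<Longrightarrow> chain_to_handcuff m n l i < m + n + l - 1"
  using m n l by (auto simp: chain_to_handcuff_def)

lemma handcuff_to_chain_lt: "x < m + n + l - 1 \<Longrightarrow> handcuff_to_chain m n l x < m + n + l - 1"
  using m n l by (auto simp: handcuff_to_chain_def)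

lemma handcuff_to_chain_chain_to_handcuff:
  "i < m + n + l - 1 \<Longrightarrow> handcuff_to_chain m n l (chain_to_handcuff m n l i) = i"
  using m n l by (auto simp: chain_to_handcuff_def handcuff_to_chain_def)

lemma chain_to_handcuff_handcuff_to_chain:
  "x < m + n + l - 1 \<Longrightarrow> chain_to_handcuff m n l (handcuff_to_chain m n l x) = x"
  using m n l by (auto simp: chain_to_handcuff_def handcuff_to_chain_def; arith)

lemma bij_betw_chain_to_handcuff:
  "bij_betw (chain_to_handcuff m n l) {0..<m + n + l - 1} {0..<m + n + l - 1}"
  by (rule bij_betw_byWitness[of _ "handcuff_to_chain m n l"])
    (auto simp: handcuff_to_chain_chain_to_handcuff chain_to_handcuff_handcuff_to_chain
      chain_to_handcuff_lt handcuff_to_chain_lt simp del: One_nat_def)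

lemma chain_to_handcuff_permutes: "chain_to_handcuff m n l permutes {0..<m + n + l - 1}"
  by (rule bij_imp_permutes[OF bij_betw_chain_to_handcuff]) (use m n l in \<open>auto simp: chain_to_handcuff_def\<close>)

lemma chain_to_handcuff_path_vertex:
  "k \<le> l \<Longrightarrow> chain_to_handcuff m n l (m - 1 + k) = handcuff_path_vertex m n l k"
  using m n l by (auto simp: chain_to_handcuff_def handcuff_path_vertex_def) (simp_all add: ac_simps)

lemma handcuff_to_chain_path_vertex:
  "k \<le> l \<Longrightarrow> handcuff_to_chain m n l (handcuff_path_vertex m n l k) = m - 1 + k"
  using handcuff_to_chain_chain_to_handcuff[of "m - 1 + k"] chain_to_handcuff_path_vertex[of k] m n l
  by simp

lemma chain_adj_handcuff_to_chain:
  assumes "handcuff_adj m n l x y"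
  shows "chain_adj m n l (handcuff_to_chain m n l x) (handcuff_to_chain m n l y)"
proof -
  let ?\<tau> = "handcuff_to_chain m n l"
  from assms consider
      (first) k where "k < m" "{x, y} = {k, (k + 1) mod m}"
    | (second) k where "k < n" "{x, y} = {m + k, m + (k + 1) mod n}"
    | (handle) k where "k < l" "{x, y} = {handcuff_path_vertex m n l k, handcuff_path_vertex m n l (k + 1)}"
    unfolding handcuff_adj_def by blast
  then show ?thesis
  proof cases
    case first
    have "chain_adj m n l (?\<tau> k) (?\<tau> ((k + 1) mod m))"
      using first(1) m n l by (auto simp: Suc_mod_if handcuff_to_chain_def chain_adj_def)
    moreover have "(x = k \<and> y = (k + 1) mod m) \<or> (x = (k + 1) mod m \<and> y = k)"
      using first(2) by (simp add: doubleton_eq_iff)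
    ultimately show ?thesis
      using chain_adj_sym by metis
  next
    case second
    have "chain_adj m n l (?\<tau> (m + k)) (?\<tau> (m + (k + 1) mod n))"
      using second(1) m n l by (auto simp: Suc_mod_if handcuff_to_chain_def chain_adj_def)
    moreover have "(x = m + k \<and> y = m + (k + 1) mod n) \<or> (x = m + (k + 1) mod n \<and> y = m + k)"
      using second(2) by (simp add: doubleton_eq_iff)
    ultimately show ?thesis
      using chain_adj_sym by metis
  next
    case handle
    have "chain_adj m n l (?\<tau> (handcuff_path_vertex m n l k)) (?\<tau> (handcuff_path_vertex m n l (k + 1)))"
      using handle(1) by (simp add: handcuff_to_chain_path_vertex chain_adj_def)
    moreover have "(x = handcuff_path_vertex m n l k \<and> y = handcuff_path_vertex m n l (k + 1)) \<or> (x = handcuff_path_vertex m n l (k + 1) \<and> y = handcuff_path_vertex m n l k)"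
      using handle(2) by (simp add: doubleton_eq_iff)
    ultimately show ?thesis
      using chain_adj_sym by metis
  qed
qed

lemma handcuff_adj_chain_to_handcuff_Suc:
  assumes j: "Suc j < m + n + l - 1"
  shows "handcuff_adj m n l (chain_to_handcuff m n l j) (chain_to_handcuff m n l (Suc j))"
proof -
  consider "j < m - 1" | "m - 1 \<le> j" "j < m + l - 1" | "m + l - 1 \<le> j"
    by linarith
  then show ?thesis
  proof cases
    case 1
    then have "chain_to_handcuff m n l j = j + 1" "chain_to_handcuff m n l (Suc j) = (j + 1 + 1) mod m"
      using m by (auto simp: chain_to_handcuff_def Suc_mod_if)
    then show ?thesis
      unfolding handcuff_adj_def using 1 by (intro disjI1 exI[of _ "j + 1"]) auto
  next
    case 2
    define k where "k = j - (m - 1)"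
    have "chain_to_handcuff m n l j = handcuff_path_vertex m n l k"
      "chain_to_handcuff m n l (Suc j) = handcuff_path_vertex m n l (k + 1)" "k < l"
      using chain_to_handcuff_path_vertex[of k] chain_to_handcuff_path_vertex[of "k + 1"] 2 m
      by (auto simp: k_def)
    then show ?thesis
      unfolding handcuff_adj_def by (intro disjI2 exI[of _ k]) simp
  next
    case 3
    define k where "k = j - (m + l - 1)"
    have "chain_to_handcuff m n l j = m + k" "chain_to_handcuff m n l (Suc j) = m + (k + 1) mod n" "k < n"
      using 3 j m n l by (auto simp: chain_to_handcuff_def k_def Suc_mod_if)
    then show ?thesis
      unfolding handcuff_adj_def by (intro disjI2 disjI1 exI[of _ k]) simp
  qed
qed

lemma handcuff_adj_chain_to_handcuff:
  assumes i: "i < m + n + l - 1" and j: "j < m + n + l - 1"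
  shows "handcuff_adj m n l (chain_to_handcuff m n l i) (chain_to_handcuff m n l j) \<longleftrightarrow> chain_adj m n l i j"
proof
  assume "handcuff_adj m n l (chain_to_handcuff m n l i) (chain_to_handcuff m n l j)"
  from chain_adj_handcuff_to_chain[OF this] show "chain_adj m n l i j"
    using handcuff_to_chain_chain_to_handcuff i j by simp
next
  assume "chain_adj m n l i j"
  then consider "i = Suc j" | "j = Suc i" | "i = 0 \<and> j = m - 1" | "i = m - 1 \<and> j = 0"
    | "i = m + l - 1 \<and> j = m + n + l - 2" | "i = m + n + l - 2 \<and> j = m + l - 1"
    unfolding chain_adj_def by blast
  then show "handcuff_adj m n l (chain_to_handcuff m n l i) (chain_to_handcuff m n l j)"
  proof cases
    case 1
    then show ?thesis
      using handcuff_adj_chain_to_handcuff_Suc[of j] i handcuff_adj_sym by metis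
  next
    case 2
    then show ?thesis
      using handcuff_adj_chain_to_handcuff_Suc[of i] j by metis
  next
    case 3
    then have "chain_to_handcuff m n l i = 1" "chain_to_handcuff m n l j = 0"
      using m by (auto simp: chain_to_handcuff_def)
    then show ?thesis
      unfolding handcuff_adj_def using m by (intro disjI1 exI[of _ 0]) auto
  next
    case 4
    then have "chain_to_handcuff m n l i = 0" "chain_to_handcuff m n l j = 1"
      using m by (auto simp: chain_to_handcuff_def)
    then show ?thesis
      unfolding handcuff_adj_def using m by (intro disjI1 exI[of _ 0]) auto
  next
    case 5
    then have "chain_to_handcuff m n l i = m" "chain_to_handcuff m n l j = m + (n - 1)"
      using m n l by (auto simp: chain_to_handcuff_def)
    then show ?thesis
      unfolding handcuff_adj_def using n by (intro disjI2 disjI1 exI[of _ "n - 1"]) auto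
  next
    case 6
    then have "chain_to_handcuff m n l i = m + (n - 1)" "chain_to_handcuff m n l j = m"
      using m n l by (auto simp: chain_to_handcuff_def)
    then show ?thesis
      unfolding handcuff_adj_def using n by (intro disjI2 disjI1 exI[of _ "n - 1"]) auto
  qed
qed

lemma graph_degree_chain_to_handcuff:
  assumes i: "i < m + n + l - 1"
  shows "graph_degree (m + n + l - 1) (handcuff_adj m n l) (chain_to_handcuff m n l i)
    = card {j. j < m + n + l - 1 \<and> chain_adj m n l i j}"
proof -
  let ?\<sigma> = "chain_to_handcuff m n l"
  have "{y. y < m + n + l - 1 \<and> handcuff_adj m n l (?\<sigma> i) y} = ?\<sigma> ` {j. j < m + n + l - 1 \<and> chain_adj m n l i j}"
  proof (intro equalityI subsetI)
    fix y assume "y \<in> {y. y < m + n + l - 1 \<and> handcuff_adj m n l (?\<sigma> i) y}"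
    then have y: "y < m + n + l - 1" "handcuff_adj m n l (?\<sigma> i) (?\<sigma> (handcuff_to_chain m n l y))"
      using chain_to_handcuff_handcuff_to_chain by auto
    then have "chain_adj m n l i (handcuff_to_chain m n l y)"
      using handcuff_adj_chain_to_handcuff[OF i handcuff_to_chain_lt[OF y(1)]] by simp
    then show "y \<in> ?\<sigma> ` {j. j < m + n + l - 1 \<and> chain_adj m n l i j}"
      using chain_to_handcuff_handcuff_to_chain[OF y(1)] handcuff_to_chain_lt[OF y(1)]
      by (metis (mono_tags, lifting) image_eqI mem_Collect_eq)
  next
    fix y assume "y \<in> ?\<sigma> ` {j. j < m + n + l - 1 \<and> chain_adj m n l i j}"
    then obtain j where "j < m + n + l - 1" "chain_adj m n l i j" "y = ?\<sigma> j"
      by auto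
    then show "y \<in> {y. y < m + n + l - 1 \<and> handcuff_adj m n l (?\<sigma> i) y}"
      using handcuff_adj_chain_to_handcuff[OF i] chain_to_handcuff_lt by auto
  qed
  moreover have "inj_on ?\<sigma> {j. j < m + n + l - 1 \<and> chain_adj m n l i j}"
    by (rule inj_on_subset[OF bij_betw_imp_inj_on[OF bij_betw_chain_to_handcuff]]) auto
  ultimately show ?thesis
    unfolding graph_degree_def by (simp add: card_image)
qed

lemma card_chain_neighbours:
  assumes i: "i < m + n + l - 1"
  shows "card {j. j < m + n + l - 1 \<and> chain_adj m n l i j} = (if i = m - 1 \<or> i = m + l - 1 then 3 else 2)"
proof -
  consider "i = 0" | "i = m - 1" | "i = m + l - 1" | "i = m + n + l - 2"
    | "i \<noteq> 0" "i \<noteq> m - 1" "i \<noteq> m + l - 1" "i \<noteq> m + n + l - 2"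
    by blast
  then show ?thesis
  proof cases
    case 1
    then have "{j. j < m + n + l - 1 \<and> chain_adj m n l i j} = {1, m - 1}"
      using m n l by (auto simp: chain_adj_def)
    then show ?thesis using 1 m by simp
  next
    case 2
    then have "{j. j < m + n + l - 1 \<and> chain_adj m n l i j} = {m - 2, m, 0}"
      using m n l by (auto simp: chain_adj_def)
    then show ?thesis using 2 m by simp
  next
    case 3
    then have "{j. j < m + n + l - 1 \<and> chain_adj m n l i j} = {m + l - 2, m + l, m + n + l - 2}"
      using m n l by (auto simp: chain_adj_def)
    moreover have "m + l - 2 \<noteq> m + l" "m + l - 2 \<noteq> m + n + l - 2" "m + l \<noteq> m + n + l - 2"
      using m n l by auto
    ultimately show ?thesis using 3 by simp
  next
    case 4
    then have "{j. j < m + n + l - 1 \<and> chain_adj m n l i j} = {m + n + l - 3, m + l - 1}"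
      using m n l by (auto simp: chain_adj_def)
    moreover have "m + n + l - 3 \<noteq> m + l - 1" "m + n + l - 2 \<noteq> m - 1" "m + n + l - 2 \<noteq> m + l - 1"
      using m n l by auto
    ultimately show ?thesis using 4 by simp
  next
    case 5
    then have "{j. j < m + n + l - 1 \<and> chain_adj m n l i j} = {i - 1, i + 1}"
      using i m n l by (auto simp: chain_adj_def)
    then show ?thesis using 5 by simp
  qed
qed

lemma graph_degree_handcuff:
  "i < m + n + l - 1 \<Longrightarrow> graph_degree (m + n + l - 1) (handcuff_adj m n l) (chain_to_handcuff m n l i)
    = (if i = m - 1 \<or> i = m + l - 1 then 3 else 2)"
  using graph_degree_chain_to_handcuff card_chain_neighbours by simp

lemma card_handcuff_edges: "card (graph_edges (m + n + l - 1) (handcuff_adj m n l)) = m + n + l"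
proof -
  let ?N = "m + n + l - 1"
  let ?two = "{m - 1, m + l - 1}"
  have irrefl: "\<not> handcuff_adj m n l x x" for x
  proof
    assume "handcuff_adj m n l x x"
    then have "chain_adj m n l (handcuff_to_chain m n l x) (handcuff_to_chain m n l x)"
      by (rule chain_adj_handcuff_to_chain)
    then show False
      using m n by (auto simp: chain_adj_def)
  qed
  have "2 * card (graph_edges ?N (handcuff_adj m n l)) = (\<Sum>x<?N. graph_degree ?N (handcuff_adj m n l) x)"
    using handcuff_adj_sym irrefl by (rule double_card_graph_edges)
  also have "\<dots> = (\<Sum>i<?N. graph_degree ?N (handcuff_adj m n l) (chain_to_handcuff m n l i))"
    using sum.reindex_bij_betw[OF bij_betw_chain_to_handcuff, of "graph_degree ?N (handcuff_adj m n l)"]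
    by (simp add: atLeast0LessThan)
  also have "\<dots> = (\<Sum>i<?N. 2 + of_bool (i \<in> ?two))"
    by (rule sum.cong) (auto simp: graph_degree_handcuff simp del: One_nat_def)
  also have "\<dots> = 2 * ?N + card ({..<?N} \<inter> ?two)"
    by (simp only: sum.distrib sum_of_bool_eq finite_lessThan Collect_mem_eq) simp
  also have "{..<?N} \<inter> ?two = ?two"
    using m n l by auto
  finally show ?thesis
    using m l by simp
qed

lemma ihara_matrix_chain_order:
  fixes u :: "'a :: comm_ring_1"
  assumes i: "i < m + n + l - 1" and j: "j < m + n + l - 1"
  shows "(1\<^sub>m (m + n + l - 1) - u \<cdot>\<^sub>m adj_matrix (m + n + l - 1) (handcuff_adj m n l)
      + u^2 \<cdot>\<^sub>m Q_matrix (m + n + l - 1) (handcuff_adj m n l))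
      $$ (chain_to_handcuff m n l i, chain_to_handcuff m n l j) = chain_entry m n l u i j"
proof -
  have "chain_to_handcuff m n l i = chain_to_handcuff m n l j \<longleftrightarrow> i = j"
    using handcuff_to_chain_chain_to_handcuff i j by metis
  moreover have "\<not> chain_adj m n l i i"
    using m n by (auto simp: chain_adj_def)
  ultimately show ?thesis
    using chain_to_handcuff_lt[OF i] chain_to_handcuff_lt[OF j] graph_degree_handcuff[OF i]
    by (auto simp: adj_matrix_def Q_matrix_def chain_entry_def handcuff_adj_chain_to_handcuff[OF i j]
      algebra_simps)
qed

lemma ihara_zeta_inv_handcuff:
  fixes u :: "'a :: idom"
  shows "ihara_zeta_inv (handcuff_nverts m n l) (handcuff_adj m n l) u
    = (1 - u ^ m)^2 * (1 - u ^ n)^2 - 4 * u ^ (m + n + 2 * l) * (1 - u ^ m) * (1 - u ^ n)"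
proof -
  let ?N = "m + n + l - 1"
  let ?M = "1\<^sub>m ?N - u \<cdot>\<^sub>m adj_matrix ?N (handcuff_adj m n l) + u^2 \<cdot>\<^sub>m Q_matrix ?N (handcuff_adj m n l)"
  have rank: "nat (cycle_rank ?N (handcuff_adj m n l) - 1) = 1"
    unfolding cycle_rank_def card_handcuff_edges using m n l by simp
  have "det ?M = det (square_mat ?N (\<lambda>i j. ?M $$ (i, j)))"
    by (rule arg_cong[of _ _ det], rule eq_matI) (auto simp: adj_matrix_def Q_matrix_def)
  also have "\<dots> = det (square_mat ?N (\<lambda>i j. ?M $$ (chain_to_handcuff m n l i, chain_to_handcuff m n l j)))"
    by (rule det_square_mat_permute[OF chain_to_handcuff_permutes, symmetric])
  also have "\<dots> = det (square_mat ?N (chain_entry m n l u))"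
    by (rule arg_cong[of _ _ det], rule square_mat_cong) (rule ihara_matrix_chain_order)
  finally show ?thesis
    unfolding ihara_zeta_inv_def handcuff_nverts_def rank using det_chain_matrix by simp
qed

end

theorem mainTheorem7:
  fixes m n l :: nat and u :: complex
  assumes "m > 2" and "n > 2" and "l > 0"
  shows "ihara_zeta_inv (handcuff_nverts m n l) (handcuff_adj m n l) u =
    - 4 * u^(2*m+2*n+2*l) + u^(2*m+2*n) + 4 * u^(2*m+n+2*l) + 4 * u^(m+2*n+2*l)
    - 2 * u^(2*m+n) - 2 * u^(m+2*n) - 4 * u^(m+n+2*l) + 4 * u^(m+n)
    + u^(2*n) + u^(2*m) - 2 * u^n - 2 * u^m + 1"
proof -
  have m: "3 \<le> m" and n: "3 \<le> n" and l: "1 \<le> l"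
    using assms by auto
  show ?thesis
    unfolding ihara_zeta_inv_handcuff[OF m n l]
    by (simp only: power_add power_mult mult.commute[of 2]) (simp add: algebra_simps power2_eq_square)
qed

end
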